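(* Let $f:[0,\infty)\to[0,\infty)$ be continuously differentiable with $f>0$ on $[t_0,\infty)$ for some $t_0\ge0$ and $f\in C^2([t_0,\infty))$, let $g=\log f$ on $[t_0,\infty)$, and assume condition (H1) of the context with the pair $(q,p)$. Then for every $\varepsilon\in(0,q)$ there exists $t_\varepsilon\ge t_0$ such that $$\left(\frac{g(t)}{g(s)}\right)^{\frac1{q+\varepsilon}}\le\frac{g'(t)}{g'(s)}\le\left(\frac{g(t)}{g(s)}\right)^{\frac1{q-\varepsilon}}$$ for all $t>s\ge t_\varepsilon$.
   Context: Condition (H1): (i) $g'(t)>0$ and $g''(t)>0$ for all $t\ge t_0$, and there is a pair $(q,p)$ with either $q=1$ and $p\in(0,\infty]$, or $q\in(1,\infty)$ and $p\in(0,\infty)$, such that $\lim_{t\to\infty}\frac{g'(t)^2}{g(t)g''(t)}=q$ and $\lim_{t\to\infty}\frac{tg'(t)}{g(t)}=p$; (ii) if $q=1$, then $tg'(t)/g(t)$ is nondecreasing on $[t_0,\infty)$ and there exist $k\in\mathbb{N}$ and $\hat g\in C^2([t_0,\infty))$ with $f=\exp_k\circ\hat g$ and $\hat g'/\hat g$ nonincreasing on $[t_0,\infty)$ ($\exp_1=\exp$, $\exp_k=\exp_{k-1}\circ\exp$). *)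

theory Defs
  imports "HOL-Analysis.Analysis"
begin

end

theory Submission
  imports Defs
begin

text \<open>
  Write \<open>G = ln f\<close>, so that \<open>G' = g1\<close> and \<open>G'' = g2\<close>. Since \<open>G'\<^sup>2 / (G G'') \<rightarrow> q\<close>, for large
  arguments \<open>(q - \<epsilon>) G G'' < G'\<^sup>2 < (q + \<epsilon>) G G''\<close>, i.e. the logarithmic derivatives
  \<open>G''/G'\<close> of \<open>G'\<close> and \<open>G'/G\<close> of \<open>G\<close> satisfy
  \<open>(G'/G) / (q + \<epsilon>) \<le> G''/G' \<le> (G'/G) / (q - \<epsilon>)\<close>. Integrating from \<open>s\<close> to \<open>t\<close> compares
  \<open>ln (G' t / G' s)\<close> with \<open>ln (G t / G s) / (q \<pm> \<epsilon>)\<close>, and exponentiating gives the claim.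
\<close>

lemma has_real_derivative_within_atLeast_imp_at:
  fixes f :: "real \<Rightarrow> real"
  assumes "(f has_real_derivative D) (at x within {a..})" "a < x"
  shows "(f has_real_derivative D) (at x)"
  using assms at_within_interior[of x "{a..}"] by simp

lemma ln_ratio_le_by_log_deriv:
  fixes u v u' v' :: "real \<Rightarrow> real" and a b s t :: real
  assumes "s \<le> t"
    and u_deriv: "\<And>x. x \<in> {s..t} \<Longrightarrow> (u has_real_derivative u' x) (at x)"
    and v_deriv: "\<And>x. x \<in> {s..t} \<Longrightarrow> (v has_real_derivative v' x) (at x)"
    and u_pos: "\<And>x. x \<in> {s..t} \<Longrightarrow> u x > 0"
    and v_pos: "\<And>x. x \<in> {s..t} \<Longrightarrow> v x > 0"
    and log_deriv_le: "\<And>x. x \<in> {s..t} \<Longrightarrow> a * (u' x / u x) \<le> b * (v' x / v x)"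
  shows "a * ln (u t / u s) \<le> b * ln (v t / v s)"
proof -
  let ?F = "\<lambda>x. b * ln (v x) - a * ln (u x)"
  have "?F s \<le> ?F t"
  proof (rule deriv_nonneg_imp_mono[where g = ?F and a = s and b = t])
    fix x assume x: "x \<in> {s..t}"
    show "(?F has_real_derivative b * (v' x / v x) - a * (u' x / u x)) (at x)"
      using u_deriv[OF x] v_deriv[OF x] u_pos[OF x] v_pos[OF x]
      by (auto intro!: derivative_eq_intros simp: divide_inverse)
    show "b * (v' x / v x) - a * (u' x / u x) \<ge> 0"
      using log_deriv_le[OF x] by simp
  qed fact
  moreover have "u s > 0" "u t > 0" "v s > 0" "v t > 0"
    using \<open>s \<le> t\<close> u_pos v_pos by auto
  ultimately show ?thesis
    by (simp add: ln_div right_diff_distrib)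
qed

lemma powr_le_iff_mult_ln_le:
  fixes x y c :: real
  assumes "x > 0" "y > 0"
  shows "x powr c \<le> y \<longleftrightarrow> c * ln x \<le> ln y"
  using assms by (simp flip: ln_le_cancel_iff)

lemma le_powr_iff_ln_le_mult:
  fixes x y c :: real
  assumes "x > 0" "y > 0"
  shows "y \<le> x powr c \<longleftrightarrow> ln y \<le> c * ln x"
  using assms by (simp flip: ln_le_cancel_iff)

lemma ratio_powr_bounds_by_log_deriv:
  fixes u v u' v' :: "real \<Rightarrow> real" and \<alpha> \<beta> s t :: real
  assumes "s \<le> t"
    and u_deriv: "\<And>x. x \<in> {s..t} \<Longrightarrow> (u has_real_derivative u' x) (at x)"
    and v_deriv: "\<And>x. x \<in> {s..t} \<Longrightarrow> (v has_real_derivative v' x) (at x)"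
    and u_pos: "\<And>x. x \<in> {s..t} \<Longrightarrow> u x > 0"
    and v_pos: "\<And>x. x \<in> {s..t} \<Longrightarrow> v x > 0"
    and lower: "\<And>x. x \<in> {s..t} \<Longrightarrow> \<alpha> * (u' x / u x) \<le> v' x / v x"
    and upper: "\<And>x. x \<in> {s..t} \<Longrightarrow> v' x / v x \<le> \<beta> * (u' x / u x)"
  shows "(u t / u s) powr \<alpha> \<le> v t / v s" and "v t / v s \<le> (u t / u s) powr \<beta>"
proof -
  have pos: "u t / u s > 0" "v t / v s > 0"
    using \<open>s \<le> t\<close> u_pos v_pos by auto
  have "\<alpha> * ln (u t / u s) \<le> 1 * ln (v t / v s)"
    by (rule ln_ratio_le_by_log_deriv[OF \<open>s \<le> t\<close> u_deriv v_deriv u_pos v_pos])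
      (use lower in auto)
  then show "(u t / u s) powr \<alpha> \<le> v t / v s"
    using pos by (simp add: powr_le_iff_mult_ln_le)
  have "1 * ln (v t / v s) \<le> \<beta> * ln (u t / u s)"
    by (rule ln_ratio_le_by_log_deriv[OF \<open>s \<le> t\<close> v_deriv u_deriv v_pos u_pos])
      (use upper in auto)
  then show "v t / v s \<le> (u t / u s) powr \<beta>"
    using pos by (simp add: le_powr_iff_ln_le_mult)
qed

lemma log_deriv_bounds_of_ratio:
  fixes G G1 G2 q e :: real
  assumes "G1 > 0" "G2 > 0" "0 < e" "e < q"
    and lower: "q - e < G1\<^sup>2 / (G * G2)" and upper: "G1\<^sup>2 / (G * G2) < q + e"
  shows "G > 0"
    and "(1 / (q + e)) * (G1 / G) \<le> G2 / G1"
    and "G2 / G1 \<le> (1 / (q - e)) * (G1 / G)"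
proof -
  have "G1\<^sup>2 / (G * G2) > 0" using lower \<open>e < q\<close> by linarith
  then show G: "G > 0"
    using \<open>G2 > 0\<close> by (simp add: zero_less_divide_iff zero_less_mult_iff)
  have "G1\<^sup>2 < (q + e) * (G * G2)" "(q - e) * (G * G2) < G1\<^sup>2"
    using lower upper G \<open>G2 > 0\<close> by (simp_all add: divide_less_eq less_divide_eq)
  moreover have "(q + e) * G > 0" "(q - e) * G > 0"
    using G assms(3,4) by simp_all
  ultimately show "(1 / (q + e)) * (G1 / G) \<le> G2 / G1"
    and "G2 / G1 \<le> (1 / (q - e)) * (G1 / G)"
    using assms(1,2) by (simp_all add: divide_simps power2_eq_square algebra_simps)
qed

theorem lemma2p7:
  fixes f f1 f2 g1 g2 :: "real \<Rightarrow> real" and t0 q :: real and p :: ereal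
  assumes t0: "t0 \<ge> 0"
    and f_C1: "\<And>t. t \<ge> 0 \<Longrightarrow> (f has_real_derivative f1 t) (at t within {0..})"
    and f1_cont: "continuous_on {0..} f1"
    and f_nonneg: "\<And>t. t \<ge> 0 \<Longrightarrow> f t \<ge> 0"
    and f_pos: "\<And>t. t \<ge> t0 \<Longrightarrow> f t > 0"
    and f_C2: "\<And>t. t \<ge> t0 \<Longrightarrow> (f1 has_real_derivative f2 t) (at t within {t0..})"
    and f2_cont: "continuous_on {t0..} f2"
    and g_deriv: "\<And>t. t \<ge> t0 \<Longrightarrow> ((\<lambda>x. ln (f x)) has_real_derivative g1 t) (at t within {t0..})"
    and g1_deriv: "\<And>t. t \<ge> t0 \<Longrightarrow> (g1 has_real_derivative g2 t) (at t within {t0..})"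
    \<comment> \<open>(H1)(i)\<close>
    and g1_pos: "\<And>t. t \<ge> t0 \<Longrightarrow> g1 t > 0"
    and g2_pos: "\<And>t. t \<ge> t0 \<Longrightarrow> g2 t > 0"
    and qp: "(q = 1 \<and> 0 < p) \<or> (q > 1 \<and> 0 < p \<and> p < \<infinity>)"
    and lim_q: "((\<lambda>t. (g1 t)\<^sup>2 / (ln (f t) * g2 t)) \<longlongrightarrow> q) at_top"
    and lim_p: "((\<lambda>t. ereal (t * g1 t / ln (f t))) \<longlongrightarrow> p) at_top"
    \<comment> \<open>(H1)(ii)\<close>
    and H1ii: "q = 1 \<Longrightarrow>
       mono_on {t0..} (\<lambda>t. t * g1 t / ln (f t)) \<and>
       (\<exists>k::nat. k \<ge> 1 \<and> (\<exists>gh gh1 gh2 :: real \<Rightarrow> real.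
          (\<forall>t\<ge>t0. (gh has_real_derivative gh1 t) (at t within {t0..})) \<and>
          (\<forall>t\<ge>t0. (gh1 has_real_derivative gh2 t) (at t within {t0..})) \<and>
          continuous_on {t0..} gh2 \<and>
          (\<forall>t\<ge>t0. f t = (exp ^^ k) (gh t)) \<and>
          antimono_on {t0..} (\<lambda>t. gh1 t / gh t)))"
  shows "\<forall>\<epsilon>. 0 < \<epsilon> \<and> \<epsilon> < q \<longrightarrow>
     (\<exists>t\<epsilon>\<ge>t0. \<forall>t s. t\<epsilon> \<le> s \<and> s < t \<longrightarrow>
        (ln (f t) / ln (f s)) powr (1 / (q + \<epsilon>)) \<le> g1 t / g1 s \<and>
        g1 t / g1 s \<le> (ln (f t) / ln (f s)) powr (1 / (q - \<epsilon>)))"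
proof (intro allI impI)
  fix e :: real
  assume e: "0 < e \<and> e < q"
  let ?G = "\<lambda>x. ln (f x)"
  have "eventually (\<lambda>x. x > t0 \<and> (g1 x)\<^sup>2 / (?G x * g2 x) \<in> {q - e <..< q + e}) at_top"
    using lim_q e by (intro eventually_conj eventually_gt_at_top topological_tendstoD) auto
  then obtain T where T: "\<And>x. x \<ge> T \<Longrightarrow> x > t0 \<and> (g1 x)\<^sup>2 / (?G x * g2 x) \<in> {q - e <..< q + e}"
    by (auto simp: eventually_at_top_linorder)
  have derivs: "(?G has_real_derivative g1 x) (at x)" "(g1 has_real_derivative g2 x) (at x)"
    if "x \<ge> T" for x
    using T[OF that] has_real_derivative_within_atLeast_imp_at[OF g_deriv]
      has_real_derivative_within_atLeast_imp_at[OF g1_deriv] by auto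
  have g1_pos': "g1 x > 0" if "x \<ge> T" for x
    using g1_pos T[OF that] by auto
  have bounds: "?G x > 0" "(1 / (q + e)) * (g1 x / ?G x) \<le> g2 x / g1 x"
    "g2 x / g1 x \<le> (1 / (q - e)) * (g1 x / ?G x)" if "x \<ge> T" for x
    using log_deriv_bounds_of_ratio[of "g1 x" "g2 x" e q "?G x"] T[OF that] e
      g1_pos' g2_pos that by auto
  show "\<exists>t\<epsilon>\<ge>t0. \<forall>t s. t\<epsilon> \<le> s \<and> s < t \<longrightarrow>
        (?G t / ?G s) powr (1 / (q + e)) \<le> g1 t / g1 s \<and>
        g1 t / g1 s \<le> (?G t / ?G s) powr (1 / (q - e))"
  proof (intro exI[of _ "max t0 T"] conjI allI impI)
    fix t s assume "max t0 T \<le> s \<and> s < t"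
    then have "s \<le> t" and tail: "\<And>x. x \<in> {s..t} \<Longrightarrow> x \<ge> T" by auto
    note bounds_on_interval = ratio_powr_bounds_by_log_deriv[where u' = g1 and v' = g2
        and \<alpha> = "1 / (q + e)" and \<beta> = "1 / (q - e)"]
    show "(?G t / ?G s) powr (1 / (q + e)) \<le> g1 t / g1 s"
      using \<open>s \<le> t\<close> by (intro bounds_on_interval(1) derivs bounds g1_pos' tail) auto
    show "g1 t / g1 s \<le> (?G t / ?G s) powr (1 / (q - e))"
      using \<open>s \<le> t\<close> by (intro bounds_on_interval(2) derivs bounds g1_pos' tail) auto
  qed simp
qed

end
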